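(* Let $M\subset\mathbb{C}$ be a bounded domain, $\omega$ a finite positive Borel measure with compact support, $h$ harmonic on $M$, and $\lambda=e^{-2(p(\omega)+h)}$. If $z_0\in M$ satisfies $\omega(\{z_0\})\ge2\pi$, then every broken line $K\subset M$ having $z_0$ as an extremity satisfies $\tilde s_\lambda(K)=+\infty$; consequently $\rho_\lambda(z_0,z)=+\infty$ for every $z\in M\setminus\{z_0\}$, i.e. $z_0$ is a point at infinity of $\rho_\lambda$.
   Context: $p(z;\omega)=\frac1{2\pi}\iint\ln|z-\zeta|\,d\omega(\zeta)$. For a rectifiable arc $K$ with Euclidean length $s(K)$ and parameterization proportional to arc length $z:[0,1]\to\mathbb{C}$, $\tilde s_\lambda(K)=s(K)\int_0^1\lambda^{1/2}(z(t))\,dt$. $\rho_\lambda(a,b)$ is the infimum of $\tilde s_\lambda(L)$ over broken lines $L\subset M$ joining $a$ and $b$ (infimum of the empty set being $+\infty$). *)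

theory Defs
  imports "HOL-Analysis.Analysis"
begin

definition harmonic_on :: "complex set \<Rightarrow> (complex \<Rightarrow> real) \<Rightarrow> bool" where
  "harmonic_on M h \<longleftrightarrow> open M \<and>
     (\<exists>hx hy hxx hxy hyx hyy :: complex \<Rightarrow> real.
        (\<forall>z\<in>M. (h has_derivative (\<lambda>v. Re v * hx z + Im v * hy z)) (at z)) \<and>
        (\<forall>z\<in>M. (hx has_derivative (\<lambda>v. Re v * hxx z + Im v * hxy z)) (at z)) \<and>
        (\<forall>z\<in>M. (hy has_derivative (\<lambda>v. Re v * hyx z + Im v * hyy z)) (at z)) \<and>
        continuous_on M hxx \<and> continuous_on M hxy \<and>
        continuous_on M hyx \<and> continuous_on M hyy \<and>
        (\<forall>z\<in>M. hxx z + hyy z = 0))"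

definition msupport :: "complex measure \<Rightarrow> complex set" where
  "msupport \<omega> = {z. \<forall>e>0. emeasure \<omega> (ball z e) > 0}"

section \<open>Logarithmic potential p(z;omega) = (1/2pi) int ln|z - zeta| d omega(zeta), valued in [-inf, inf)\<close>

definition log_potential :: "complex measure \<Rightarrow> complex \<Rightarrow> ereal" where
  "log_potential \<omega> z =
     (enn2ereal (\<integral>\<^sup>+ \<zeta>. (if \<zeta> = z then 0 else ennreal (max 0 (ln (cmod (z - \<zeta>))))) \<partial>\<omega>)
      - enn2ereal (\<integral>\<^sup>+ \<zeta>. (if \<zeta> = z then \<infinity> else ennreal (max 0 (- ln (cmod (z - \<zeta>))))) \<partial>\<omega>))
     / ereal (2 * pi)"

definition lam :: "complex measure \<Rightarrow> (complex \<Rightarrow> real) \<Rightarrow> complex \<Rightarrow> ennreal" where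
  "lam \<omega> h z = (case log_potential \<omega> z of
       ereal r \<Rightarrow> ennreal (exp (-2 * (r + h z)))
     | PInfty \<Rightarrow> 0
     | MInfty \<Rightarrow> \<infinity>)"

definition ennsqrt :: "ennreal \<Rightarrow> ennreal" where
  "ennsqrt x = (if x = \<infinity> then \<infinity> else ennreal (sqrt (enn2real x)))"

definition path_length :: "(real \<Rightarrow> complex) \<Rightarrow> real \<Rightarrow> real \<Rightarrow> ennreal" where
  "path_length g a b =
     (SUP ts \<in> {ts. ts \<noteq> [] \<and> sorted ts \<and> hd ts = a \<and> last ts = b}.
        \<Sum>i<length ts - 1. ennreal (dist (g (ts ! i)) (g (ts ! Suc i))))"

definition arclength_param :: "(real \<Rightarrow> complex) \<Rightarrow> bool" where
  "arclength_param g \<longleftrightarrow>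
     (\<forall>a b. 0 \<le> a \<and> a \<le> b \<and> b \<le> 1 \<longrightarrow>
        path_length g a b = ennreal (b - a) * path_length g 0 1)"

definition broken_line :: "(real \<Rightarrow> complex) \<Rightarrow> bool" where
  "broken_line g \<longleftrightarrow>
     (\<exists>ts. ts \<noteq> [] \<and> sorted_wrt (<) ts \<and> hd ts = 0 \<and> last ts = 1 \<and>
        (\<forall>i < length ts - 1. \<forall>t \<in> {ts ! i .. ts ! Suc i}.
           g t = g (ts ! i) + of_real ((t - ts ! i) / (ts ! Suc i - ts ! i)) * (g (ts ! Suc i) - g (ts ! i)))) \<and>
     (\<exists>t\<in>{0..1}. g t \<noteq> g 0)"

definition s_tilde :: "(complex \<Rightarrow> ennreal) \<Rightarrow> (real \<Rightarrow> complex) \<Rightarrow> ennreal" where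
  "s_tilde lm g = path_length g 0 1 * (\<integral>\<^sup>+ t \<in> {0..1}. ennsqrt (lm (g t)) \<partial>lborel)"

definition rho :: "(complex \<Rightarrow> ennreal) \<Rightarrow> complex set \<Rightarrow> complex \<Rightarrow> complex \<Rightarrow> ennreal" where
  "rho lm M a b = (INF g \<in> {g. broken_line g \<and> arclength_param g \<and> g ` {0..1} \<subseteq> M \<and>
                                g 0 = a \<and> g 1 = b}. s_tilde lm g)"

end

(*
  An atom of mass at least 2 pi at z0 contributes at most ln |z - z0| to the potential p(z), the rest
  of p being bounded above near z0 (the support is compact), and h is bounded above near z0 by
  continuity. Hence sqrt lambda(z) >= c / |z - z0| near z0, and sqrt lambda(z0) = infinity.
  Along the first or last segment of a broken line ending at z0 we have |z(t) - z0| <= C |t - t0|,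
  so the integral of sqrt lambda along it dominates that of 1 / |t - t0|, which diverges; the line
  is not constant, so its length is positive and s_lambda = infinity. rho(z0, z) is then an
  infimum of infinite values.
*)
theory Submission
  imports Defs
begin

definition log_plus_integral :: "complex measure \<Rightarrow> complex \<Rightarrow> ennreal" where
  "log_plus_integral \<omega> z =
     (\<integral>\<^sup>+ \<zeta>. (if \<zeta> = z then 0 else ennreal (max 0 (ln (cmod (z - \<zeta>))))) \<partial>\<omega>)"

definition log_minus_integral :: "complex measure \<Rightarrow> complex \<Rightarrow> ennreal" where
  "log_minus_integral \<omega> z =
     (\<integral>\<^sup>+ \<zeta>. (if \<zeta> = z then \<infinity> else ennreal (max 0 (- ln (cmod (z - \<zeta>))))) \<partial>\<omega>)"

lemma log_potential_eq:
  "log_potential \<omega> z =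
     (enn2ereal (log_plus_integral \<omega> z) - enn2ereal (log_minus_integral \<omega> z)) / ereal (2 * pi)"
  unfolding log_potential_def log_plus_integral_def log_minus_integral_def ..

lemma AE_in_msupport:
  fixes \<omega> :: "complex measure"
  assumes sets: "sets \<omega> = sets borel"
  shows "AE \<zeta> in \<omega>. \<zeta> \<in> msupport \<omega>"
proof -
  define F where "F = {ball x e | x e. e > 0 \<and> emeasure \<omega> (ball x e) = 0}"
  have F_cover: "\<Union>F = - msupport \<omega>"
  proof (intro equalityI subsetI)
    fix y assume "y \<in> \<Union>F"
    then obtain x e where null: "emeasure \<omega> (ball x e) = 0" and y: "y \<in> ball x e"
      unfolding F_def by blast
    have "ball y (e - dist x y) \<subseteq> ball x e"
      by (rule ball_subset_ball_iff[THEN iffD2]) (simp add: dist_commute)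
    moreover have "ball x e \<in> sets \<omega>" using sets by simp
    ultimately have "emeasure \<omega> (ball y (e - dist x y)) = 0"
      using null emeasure_mono[of "ball y (e - dist x y)" "ball x e" \<omega>] by simp
    moreover have "e - dist x y > 0" using y by simp
    ultimately have "\<not> (\<forall>e>0. emeasure \<omega> (ball y e) > 0)" by (metis less_irrefl)
    then show "y \<in> - msupport \<omega>" unfolding msupport_def by simp
  next
    fix y assume "y \<in> - msupport \<omega>"
    then obtain e where "e > 0" "emeasure \<omega> (ball y e) = 0"
      unfolding msupport_def by (auto simp: not_gr_zero)
    then show "y \<in> \<Union>F" unfolding F_def by force
  qed
  have F_open: "\<And>S. S \<in> F \<Longrightarrow> open S" unfolding F_def by auto
  have F_null: "S \<in> null_sets \<omega>" if "S \<in> F" for S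
  proof -
    obtain x e where "S = ball x e" "emeasure \<omega> (ball x e) = 0"
      using \<open>S \<in> F\<close> unfolding F_def by blast
    moreover have "ball x e \<in> sets \<omega>" using sets by simp
    ultimately show ?thesis by (simp add: null_sets_def)
  qed
  obtain F' where F': "F' \<subseteq> F" "countable F'" "\<Union>F' = \<Union>F"
    using Lindelof[OF F_open] by blast
  have "\<Union>F' \<in> null_sets \<omega>"
    using null_sets_UN'[of F' id \<omega>] F' F_null by (simp add: subset_iff)
  then show ?thesis
    using F'(3) F_cover by (intro AE_I'[of "- msupport \<omega>"]) auto
qed

lemma log_plus_integral_bounded:
  fixes \<omega> :: "complex measure"
  assumes sets: "sets \<omega> = sets borel" and fin: "finite_measure \<omega>"
    and cpt: "compact (msupport \<omega>)" and S: "bounded S"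
  obtains B where "B \<ge> 0" "\<And>z. z \<in> S \<Longrightarrow> log_plus_integral \<omega> z \<le> ennreal B"
proof -
  obtain R where R: "R \<ge> 0" "\<And>z \<zeta>. z \<in> S \<Longrightarrow> \<zeta> \<in> msupport \<omega> \<Longrightarrow> cmod (z - \<zeta>) \<le> R"
  proof -
    obtain r1 r2 where "\<forall>z\<in>S. cmod z \<le> r1" "\<forall>\<zeta>\<in>msupport \<omega>. cmod \<zeta> \<le> r2"
      using S compact_imp_bounded[OF cpt] by (auto simp: bounded_iff)
    moreover have "cmod (z - \<zeta>) \<le> \<bar>r1\<bar> + \<bar>r2\<bar>" if "cmod z \<le> r1" "cmod \<zeta> \<le> r2" for z \<zeta>
      using that norm_triangle_ineq4[of z \<zeta>] by linarith
    ultimately show ?thesis by (intro that[of "\<bar>r1\<bar> + \<bar>r2\<bar>"]) auto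
  qed
  obtain e where e: "emeasure \<omega> (space \<omega>) = ennreal e" "e \<ge> 0"
    using finite_measure.emeasure_finite[OF fin] by (cases "emeasure \<omega> (space \<omega>)") auto
  show thesis
  proof (rule that[of "R * e"])
    fix z assume "z \<in> S"
    have "AE \<zeta> in \<omega>. (if \<zeta> = z then 0 else ennreal (max 0 (ln (cmod (z - \<zeta>))))) \<le> ennreal R"
      using AE_in_msupport[OF sets]
    proof eventually_elim
      case (elim \<zeta>)
      have "ln (cmod (z - \<zeta>)) \<le> cmod (z - \<zeta>)"
        by (cases "z = \<zeta>") (auto intro: order_trans[OF ln_le_minus_one])
      then show ?case using R(1) R(2)[OF \<open>z \<in> S\<close> elim] by (auto intro!: ennreal_leI)
    qed
    then have "log_plus_integral \<omega> z \<le> (\<integral>\<^sup>+ \<zeta>. ennreal R \<partial>\<omega>)"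
      unfolding log_plus_integral_def by (rule nn_integral_mono_AE)
    also have "\<dots> = ennreal (R * e)"
      using R(1) e by (simp add: ennreal_mult)
    finally show "log_plus_integral \<omega> z \<le> ennreal (R * e)" .
  qed (use R(1) e(2) in simp)
qed

lemma log_minus_integral_ge_atom:
  fixes \<omega> :: "complex measure"
  assumes sets: "sets \<omega> = sets borel" and "z \<noteq> z0"
  shows "ennreal (- ln (cmod (z - z0))) * emeasure \<omega> {z0} \<le> log_minus_integral \<omega> z"
proof -
  have "ennreal (- ln (cmod (z - z0))) * emeasure \<omega> {z0}
      = (\<integral>\<^sup>+ \<zeta>. ennreal (- ln (cmod (z - z0))) * indicator {z0} \<zeta> \<partial>\<omega>)"
    using sets by (intro nn_integral_cmult_indicator[symmetric]) simp
  also have "\<dots> \<le> log_minus_integral \<omega> z"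
    unfolding log_minus_integral_def using assms(2)
    by (intro nn_integral_mono) (simp add: indicator_def ennreal_leI)
  finally show ?thesis .
qed

lemma log_minus_integral_at_atom:
  fixes \<omega> :: "complex measure"
  assumes "sets \<omega> = sets borel" and "emeasure \<omega> {z0} \<noteq> 0"
  shows "log_minus_integral \<omega> z0 = \<infinity>"
proof -
  have "\<infinity> * emeasure \<omega> {z0} = (\<integral>\<^sup>+ \<zeta>. \<infinity> * indicator {z0} \<zeta> \<partial>\<omega>)"
    using assms(1) by (intro nn_integral_cmult_indicator[symmetric]) simp
  also have "\<dots> \<le> log_minus_integral \<omega> z0"
    unfolding log_minus_integral_def by (intro nn_integral_mono) (simp add: indicator_def)
  finally show ?thesis
    using assms(2) by (simp add: ennreal_mult_eq_top_iff top_unique)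
qed

lemma log_potential_le_near_atom:
  fixes \<omega> :: "complex measure"
  assumes sets: "sets \<omega> = sets borel" and fin: "finite_measure \<omega>"
    and cpt: "compact (msupport \<omega>)" and mass: "emeasure \<omega> {z0} \<ge> ennreal m" and "m \<ge> 0"
  obtains B where
    "\<And>z. z \<noteq> z0 \<Longrightarrow> dist z z0 < 1 \<Longrightarrow>
       log_potential \<omega> z \<le> ereal ((B + m * ln (dist z z0)) / (2 * pi))"
proof -
  obtain B where "B \<ge> 0" and B: "\<And>z. z \<in> ball z0 1 \<Longrightarrow> log_plus_integral \<omega> z \<le> ennreal B"
    using log_plus_integral_bounded[OF sets fin cpt, of "ball z0 1"] by blast
  show thesis
  proof (rule that[of B])
    fix z assume z: "z \<noteq> z0" "dist z z0 < 1"
    have d: "0 < dist z z0" "- ln (dist z z0) \<ge> 0" using z by auto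
    have "0 \<le> - m * ln (dist z z0)"
      using mult_nonneg_nonneg[OF \<open>m \<ge> 0\<close> d(2)] by simp
    have "enn2ereal (log_plus_integral \<omega> z) \<le> ereal B"
      using B[of z] z \<open>B \<ge> 0\<close> by (simp add: dist_commute less_eq_ennreal.rep_eq flip: enn2ereal_ennreal)
    moreover have "ennreal (- m * ln (dist z z0)) \<le> log_minus_integral \<omega> z"
    proof -
      have "ennreal (- m * ln (dist z z0)) = ennreal (- ln (cmod (z - z0))) * ennreal m"
        using d \<open>m \<ge> 0\<close> ennreal_mult[of "- ln (cmod (z - z0))" m] by (simp add: dist_norm mult.commute)
      also have "\<dots> \<le> ennreal (- ln (cmod (z - z0))) * emeasure \<omega> {z0}"
        using mass by (intro mult_left_mono) auto
      also have "\<dots> \<le> log_minus_integral \<omega> z"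
        using log_minus_integral_ge_atom[OF sets z(1)] .
      finally show ?thesis .
    qed
    then have "ereal (- m * ln (dist z z0)) \<le> enn2ereal (log_minus_integral \<omega> z)"
      using \<open>0 \<le> - m * ln (dist z z0)\<close> by (simp add: less_eq_ennreal.rep_eq)
    ultimately have "enn2ereal (log_plus_integral \<omega> z) - enn2ereal (log_minus_integral \<omega> z)
        \<le> ereal B - ereal (- m * ln (dist z z0))"
      by (rule ereal_minus_mono)
    then show "log_potential \<omega> z \<le> ereal ((B + m * ln (dist z z0)) / (2 * pi))"
      unfolding log_potential_eq by (auto dest: ereal_divide_right_mono[of _ _ "ereal (2 * pi)"])
  qed
qed

lemma log_potential_at_atom:
  fixes \<omega> :: "complex measure"
  assumes sets: "sets \<omega> = sets borel" and fin: "finite_measure \<omega>"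
    and cpt: "compact (msupport \<omega>)" and "emeasure \<omega> {z0} \<noteq> 0"
  shows "log_potential \<omega> z0 = -\<infinity>"
proof -
  obtain B where "log_plus_integral \<omega> z0 \<le> ennreal B"
    using log_plus_integral_bounded[OF sets fin cpt, of "{z0}"] by auto
  then have "log_plus_integral \<omega> z0 \<noteq> \<infinity>" by (auto simp: top_unique)
  then show ?thesis
    using log_minus_integral_at_atom[OF sets assms(4)]
    by (cases "log_plus_integral \<omega> z0") (simp_all add: log_potential_eq divide_ereal_def)
qed

lemma lam_eq_top_if_log_potential_eq_minf:
  "log_potential \<omega> z = -\<infinity> \<Longrightarrow> lam \<omega> h z = \<infinity>"
  by (simp add: lam_def)

lemma lam_ge_if_log_potential_le:
  assumes "log_potential \<omega> z \<le> ereal r"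
  shows "ennreal (exp (-2 * (r + h z))) \<le> lam \<omega> h z"
  using assms by (cases "log_potential \<omega> z") (auto simp: lam_def intro!: ennreal_leI)

lemma ennsqrt_ennreal: "0 \<le> x \<Longrightarrow> ennsqrt (ennreal x) = ennreal (sqrt x)"
  by (simp add: ennsqrt_def)

lemma ennsqrt_mono: "x \<le> y \<Longrightarrow> ennsqrt x \<le> ennsqrt y"
  by (cases x; cases y) (auto simp: ennsqrt_def top_unique intro!: ennreal_leI)

lemma sqrt_lam_ge_inverse_dist_near_atom:
  fixes \<omega> :: "complex measure" and h :: "complex \<Rightarrow> real"
  assumes sets: "sets \<omega> = sets borel" and fin: "finite_measure \<omega>"
    and cpt: "compact (msupport \<omega>)" and mass: "emeasure \<omega> {z0} \<ge> ennreal (2 * pi)"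
    and h: "isCont h z0"
  obtains \<delta> c where "\<delta> > 0" "c > 0" "ennsqrt (lam \<omega> h z0) = \<infinity>"
    "\<And>z. z \<noteq> z0 \<Longrightarrow> dist z z0 < \<delta> \<Longrightarrow> ennreal (c / dist z z0) \<le> ennsqrt (lam \<omega> h z)"
proof -
  obtain B where B: "\<And>z. z \<noteq> z0 \<Longrightarrow> dist z z0 < 1 \<Longrightarrow>
      log_potential \<omega> z \<le> ereal ((B + 2 * pi * ln (dist z z0)) / (2 * pi))"
    using log_potential_le_near_atom[OF sets fin cpt mass] by auto
  obtain \<delta>1 where "\<delta>1 > 0" and \<delta>1: "\<And>z. z \<noteq> z0 \<Longrightarrow> dist z z0 < \<delta>1 \<Longrightarrow> h z < h z0 + 1"
    using metric_LIM_D[OF h[unfolded isCont_def], of 1] by (force simp: dist_real_def abs_less_iff)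
  have "emeasure \<omega> {z0} \<noteq> 0"
    using mass by (auto simp: le_zero_eq)
  then have "lam \<omega> h z0 = \<infinity>"
    by (intro lam_eq_top_if_log_potential_eq_minf log_potential_at_atom[OF sets fin cpt])
  show thesis
  proof (rule that[of "min 1 \<delta>1" "exp (- (B / (2 * pi) + h z0 + 1))"])
    fix z assume z: "z \<noteq> z0" "dist z z0 < min 1 \<delta>1"
    define d where "d = dist z z0"
    have d: "0 < d" "h z < h z0 + 1" using z \<delta>1 unfolding d_def by auto
    define r where "r = B / (2 * pi) + ln d"
    have "log_potential \<omega> z \<le> ereal r"
      using B[OF z(1)] z unfolding r_def d_def by (simp add: add_divide_distrib)
    then have "ennsqrt (ennreal (exp (-2 * (r + h z)))) \<le> ennsqrt (lam \<omega> h z)"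
      by (intro ennsqrt_mono lam_ge_if_log_potential_le)
    moreover have "sqrt (exp (-2 * (r + h z))) = exp (- (B / (2 * pi) + h z)) / d"
    proof -
      have "exp (-2 * (r + h z)) = (exp (- (r + h z)))\<^sup>2"
        by (simp add: power2_eq_square flip: exp_add)
      then have "sqrt (exp (-2 * (r + h z))) = exp (- (B / (2 * pi) + h z) - ln d)"
        by (simp add: r_def algebra_simps)
      also have "\<dots> = exp (- (B / (2 * pi) + h z)) / d"
        using d by (simp add: exp_diff)
      finally show ?thesis .
    qed
    moreover have "exp (- (B / (2 * pi) + h z0 + 1)) / d \<le> exp (- (B / (2 * pi) + h z)) / d"
      using d by (intro divide_right_mono) auto
    ultimately have "ennreal (exp (- (B / (2 * pi) + h z0 + 1)) / d) \<le> ennsqrt (lam \<omega> h z)"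
      by (metis ennreal_leI ennsqrt_ennreal exp_ge_zero order_trans)
    then show "ennreal (exp (- (B / (2 * pi) + h z0 + 1)) / dist z z0) \<le> ennsqrt (lam \<omega> h z)"
      unfolding d_def .
  qed (use \<open>\<delta>1 > 0\<close> \<open>lam \<omega> h z0 = \<infinity>\<close> in \<open>auto simp: ennsqrt_def\<close>)
qed

lemma nn_integral_inverse_lower_end_eq_top:
  fixes a b k :: real
  assumes "a < b" and "k > 0"
  shows "(\<integral>\<^sup>+ x. ennreal (k / (x - a)) * indicator {a<..b} x \<partial>lborel) = \<infinity>"
proof -
  let ?I = "\<integral>\<^sup>+ x. ennreal (k / (x - a)) * indicator {a<..b} x \<partial>lborel"
  have lower: "ennreal (k * (ln (b - a) - ln e)) \<le> ?I" if e: "0 < e" "e < b - a" for e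
  proof -
    have "((\<lambda>x. k / (x - a)) has_integral (k * ln (b - a) - k * ln (a + e - a))) {a + e..b}"
    proof (rule fundamental_theorem_of_calculus)
      fix x assume "x \<in> {a + e..b}"
      then have "((\<lambda>x. k * ln (x - a)) has_real_derivative k / (x - a)) (at x within {a + e..b})"
        using e by (auto intro!: derivative_eq_intros simp: field_simps)
      then show "((\<lambda>x. k * ln (x - a)) has_vector_derivative k / (x - a)) (at x within {a + e..b})"
        by (simp add: has_real_derivative_iff_has_vector_derivative)
    qed (use e in simp)
    then have "(\<integral>\<^sup>+ x. ennreal (k / (x - a)) * indicator {a + e..b} x \<partial>lborel)
        = ennreal (k * (ln (b - a) - ln e))"
      by (intro nn_integral_has_integral_lebesgue') (use e \<open>k > 0\<close> in \<open>auto simp: right_diff_distrib\<close>)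
    moreover have "(\<integral>\<^sup>+ x. ennreal (k / (x - a)) * indicator {a + e..b} x \<partial>lborel) \<le> ?I"
      using e by (intro nn_integral_mono) (auto simp: indicator_def)
    ultimately show ?thesis by simp
  qed
  show ?thesis
  proof (rule ccontr)
    assume "?I \<noteq> \<infinity>"
    then obtain r where r: "?I = ennreal r" "0 \<le> r" by (cases ?I) auto
    \<comment> \<open>chosen so that the integral over \<open>{a + e..b}\<close> is \<open>r + 1\<close>\<close>
    define e where "e = (b - a) * exp (- (r + 1) / k)"
    have "0 < e" "e < b - a"
      using assms r(2) unfolding e_def by (auto simp: divide_neg_pos)
    moreover have "k * (ln (b - a) - ln e) = r + 1"
      using assms unfolding e_def by (simp add: ln_mult)
    ultimately have "ennreal (r + 1) \<le> ennreal r" using lower r(1) by metis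
    then show False using r(2) by (simp add: ennreal_le_iff)
  qed
qed

lemma nn_integral_inverse_upper_end_eq_top:
  fixes a b k :: real
  assumes "a < b" and "k > 0"
  shows "(\<integral>\<^sup>+ x. ennreal (k / (b - x)) * indicator {a..<b} x \<partial>lborel) = \<infinity>"
proof -
  have "(\<integral>\<^sup>+ x. ennreal (k / (b - x)) * indicator {a..<b} x \<partial>lborel)
      = (\<integral>\<^sup>+ x. ennreal (k / (x - a)) * indicator {a<..b} x \<partial>lborel)"
    by (subst nn_integral_real_affine[of _ "-1" "a + b"])
       (auto simp: indicator_def intro!: nn_integral_cong)
  then show ?thesis using nn_integral_inverse_lower_end_eq_top[OF assms] by simp
qed

lemma nn_integral_inverse_abs_dist_eq_top:
  fixes a s t k :: real
  assumes "s < t" and "a \<in> {s..t}" and "k > 0"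
  shows "(\<integral>\<^sup>+ x. ennreal (k / \<bar>x - a\<bar>) * indicator {s..t} x \<partial>lborel) = \<infinity>"
proof (cases "a < t")
  case True
  have "(\<integral>\<^sup>+ x. ennreal (k / (x - a)) * indicator {a<..t} x \<partial>lborel)
      \<le> (\<integral>\<^sup>+ x. ennreal (k / \<bar>x - a\<bar>) * indicator {s..t} x \<partial>lborel)"
    using assms(2) by (intro nn_integral_mono) (auto simp: indicator_def)
  then show ?thesis
    using nn_integral_inverse_lower_end_eq_top[OF True assms(3)] by (simp add: top_unique)
next
  case False
  with assms have "a = t" by simp
  have "(\<integral>\<^sup>+ x. ennreal (k / (a - x)) * indicator {s..<a} x \<partial>lborel)
      \<le> (\<integral>\<^sup>+ x. ennreal (k / \<bar>x - a\<bar>) * indicator {s..t} x \<partial>lborel)"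
    using \<open>a = t\<close> by (intro nn_integral_mono) (auto simp: indicator_def)
  then show ?thesis
    using nn_integral_inverse_upper_end_eq_top[OF _ assms(3), of s a] assms(1) \<open>a = t\<close>
    by (simp add: top_unique)
qed

lemma nn_integral_comp_eq_top_near_pole:
  fixes F :: "'a::metric_space \<Rightarrow> ennreal" and g :: "real \<Rightarrow> 'a"
  assumes "\<delta> > 0" and "c > 0" and "F z0 = \<infinity>"
    and F: "\<And>z. z \<noteq> z0 \<Longrightarrow> dist z z0 < \<delta> \<Longrightarrow> ennreal (c / dist z z0) \<le> F z"
    and "s < t" and "a \<in> {s..t}" and "{s..t} \<subseteq> {0..1}" and "C \<ge> 0"
    and g: "\<And>x. x \<in> {s..t} \<Longrightarrow> dist (g x) z0 \<le> C * \<bar>x - a\<bar>"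
  shows "(\<integral>\<^sup>+ x \<in> {0..1}. F (g x) \<partial>lborel) = \<infinity>"
proof -
  define \<eta> where "\<eta> = \<delta> / 2 / (C + 1)"
  define s' t' where "s' = max s (a - \<eta>)" and "t' = min t (a + \<eta>)"
  have "\<eta> > 0" using assms(1,8) unfolding \<eta>_def by (intro divide_pos_pos) auto
  then have "s' < t'" "a \<in> {s'..t'}" "{s'..t'} \<subseteq> {s..t}"
    using assms(5,6) unfolding s'_def t'_def by auto
  have F_g: "ennreal (c / (C + 1) / \<bar>x - a\<bar>) \<le> F (g x)" if x: "x \<in> {s'..t'}" for x
  proof (cases "g x = z0")
    case False
    have "dist (g x) z0 \<le> C * \<bar>x - a\<bar>"
      using g x \<open>{s'..t'} \<subseteq> {s..t}\<close> by auto
    also have "\<dots> \<le> (C + 1) * \<bar>x - a\<bar>" by (simp add: algebra_simps)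
    finally have d: "dist (g x) z0 \<le> (C + 1) * \<bar>x - a\<bar>" .
    also have "\<dots> \<le> (C + 1) * \<eta>"
      using x assms(8) unfolding s'_def t'_def by (intro mult_left_mono) auto
    also have "\<dots> = \<delta> / 2"
    proof -
      have "C + 1 \<noteq> 0" using assms(8) by simp
      then show ?thesis unfolding \<eta>_def by (simp add: field_simps)
    qed
    finally have "dist (g x) z0 < \<delta>" using assms(1) by simp
    moreover have "c / ((C + 1) * \<bar>x - a\<bar>) \<le> c / dist (g x) z0"
      using False d assms(2,8) by (intro divide_left_mono) (auto intro!: mult_pos_pos)
    ultimately show ?thesis
      using F[OF False] by (auto intro: order_trans[OF ennreal_leI])
  qed (simp add: \<open>F z0 = \<infinity>\<close>)
  have "(\<integral>\<^sup>+ x. ennreal (c / (C + 1) / \<bar>x - a\<bar>) * indicator {s'..t'} x \<partial>lborel)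
      \<le> (\<integral>\<^sup>+ x \<in> {0..1}. F (g x) \<partial>lborel)"
    using F_g \<open>{s'..t'} \<subseteq> {s..t}\<close> assms(7)
    by (intro nn_integral_mono) (auto simp: indicator_def)
  then show ?thesis
    using nn_integral_inverse_abs_dist_eq_top[OF \<open>s' < t'\<close> \<open>a \<in> {s'..t'}\<close>, of "c / (C + 1)"]
      assms(2,8) by (simp add: top_unique)
qed

lemma dist_affine_segment:
  fixes g :: "real \<Rightarrow> complex"
  assumes "u < v" and g: "g x = g u + of_real ((x - u) / (v - u)) * (g v - g u)"
  shows "dist (g x) (g u) = \<bar>x - u\<bar> * (dist (g v) (g u) / (v - u))"
    and "dist (g x) (g v) = \<bar>x - v\<bar> * (dist (g v) (g u) / (v - u))"
proof -
  have "g x - g u = of_real ((x - u) / (v - u)) * (g v - g u)"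
    using g by simp
  then have "dist (g x) (g u) = \<bar>(x - u) / (v - u)\<bar> * dist (g v) (g u)"
    by (simp only: dist_norm norm_mult norm_of_real)
  then show "dist (g x) (g u) = \<bar>x - u\<bar> * (dist (g v) (g u) / (v - u))"
    using assms(1) by simp
  have "g x - g v = of_real ((x - v) / (v - u)) * (g v - g u)"
    using assms by (simp add: field_simps)
  then have "dist (g x) (g v) = \<bar>(x - v) / (v - u)\<bar> * dist (g v) (g u)"
    by (simp only: dist_norm norm_mult norm_of_real)
  then show "dist (g x) (g v) = \<bar>x - v\<bar> * (dist (g v) (g u) / (v - u))"
    using assms(1) by simp
qed

lemma broken_line_dist_endpoint_le:
  assumes "broken_line g" and "e \<in> {0, 1}"
  obtains s t C where "s < t" "e \<in> {s..t}" "{s..t} \<subseteq> {0..1}" "C \<ge> 0"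
    "\<And>x. x \<in> {s..t} \<Longrightarrow> dist (g x) (g e) \<le> C * \<bar>x - e\<bar>"
proof -
  obtain ts where ts: "ts \<noteq> []" "sorted_wrt (<) ts" "hd ts = 0" "last ts = 1"
    and affine: "\<And>i x. i < length ts - 1 \<Longrightarrow> x \<in> {ts ! i .. ts ! Suc i} \<Longrightarrow>
        g x = g (ts ! i) + of_real ((x - ts ! i) / (ts ! Suc i - ts ! i)) * (g (ts ! Suc i) - g (ts ! i))"
    using assms(1) unfolding broken_line_def by blast
  define n where "n = length ts"
  have ends: "ts ! 0 = 0" "ts ! (n - 1) = 1"
    using ts unfolding n_def by (simp_all add: hd_conv_nth last_conv_nth)
  have less: "ts ! i < ts ! j" if "i < j" "j < n" for i j
    using sorted_wrt_nth_less[OF ts(2)] that unfolding n_def by blast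
  have "n \<ge> 2"
    using ts(1) ends unfolding n_def by (cases ts) (auto simp: Suc_le_eq)
  have "\<exists>i < n - 1. e \<in> {ts ! i, ts ! Suc i}"
  proof (cases "e = 0")
    case True then show ?thesis using ends \<open>n \<ge> 2\<close> by (intro exI[of _ 0]) auto
  next
    case False
    moreover have "Suc (n - 2) = n - 1" using \<open>n \<ge> 2\<close> by simp
    ultimately show ?thesis using ends \<open>n \<ge> 2\<close> assms(2) by (intro exI[of _ "n - 2"]) auto
  qed
  then obtain i where i: "i < n - 1" "e \<in> {ts ! i, ts ! Suc i}" by blast
  define u v where "u = ts ! i" and "v = ts ! Suc i"
  have "u < v" using less[of i "Suc i"] i unfolding u_def v_def by simp
  have "i < n" using i by simp
  have "0 \<le> u" using less[of 0 i] ends \<open>i < n\<close> unfolding u_def by (cases "i = 0") simp_all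
  have "v \<le> 1" using less[of "Suc i" "n - 1"] ends i unfolding v_def by (cases "Suc i = n - 1") simp_all
  show thesis
  proof (rule that[of u v "dist (g v) (g u) / (v - u)"])
    fix x assume "x \<in> {u..v}"
    then have "g x = g u + of_real ((x - u) / (v - u)) * (g v - g u)"
      using affine[of i x] i unfolding u_def v_def n_def by blast
    moreover have "e = u \<or> e = v" using i unfolding u_def v_def by simp
    ultimately show "dist (g x) (g e) \<le> dist (g v) (g u) / (v - u) * \<bar>x - e\<bar>"
      using dist_affine_segment[OF \<open>u < v\<close>] by (auto simp only: mult.commute order_refl)
  qed (use \<open>u < v\<close> \<open>0 \<le> u\<close> \<open>v \<le> 1\<close> i in \<open>auto simp: u_def v_def\<close>)
qed

lemma dist_le_path_length:
  assumes "a \<le> b"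
  shows "ennreal (dist (g a) (g b)) \<le> path_length g a b"
proof -
  have "(\<Sum>i<length [a, b] - 1. ennreal (dist (g ([a, b] ! i)) (g ([a, b] ! Suc i))))
      \<le> path_length g a b"
    unfolding path_length_def using assms by (intro SUP_upper) simp
  then show ?thesis by simp
qed

lemma path_length_neq_0_if_arclength_param:
  assumes "arclength_param g" and "t \<in> {0..1}" and "g t \<noteq> g 0"
  shows "path_length g 0 1 \<noteq> 0"
proof
  assume "path_length g 0 1 = 0"
  moreover have "path_length g 0 t = ennreal (t - 0) * path_length g 0 1"
    using assms(1)[unfolded arclength_param_def, rule_format, of 0 t] assms(2) by simp
  ultimately have "path_length g 0 t = 0" by simp
  moreover have "ennreal (dist (g 0) (g t)) \<le> path_length g 0 t"
    using assms(2) by (intro dist_le_path_length) simp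
  ultimately show False using assms(3) by simp
qed

theorem lemma4p20:
  fixes M :: "complex set" and \<omega> :: "complex measure" and h :: "complex \<Rightarrow> real" and z0 :: complex
  assumes "open M" and "connected M" and "bounded M"
    and "sets \<omega> = sets borel" and "finite_measure \<omega>" and "compact (msupport \<omega>)"
    and "harmonic_on M h"
    and "z0 \<in> M" and "emeasure \<omega> {z0} \<ge> ennreal (2 * pi)"
  shows "(\<forall>g. broken_line g \<and> arclength_param g \<and> g ` {0..1} \<subseteq> M \<and> (g 0 = z0 \<or> g 1 = z0)
            \<longrightarrow> s_tilde (lam \<omega> h) g = \<infinity>)
       \<and> (\<forall>z \<in> M - {z0}. rho (lam \<omega> h) M z0 z = \<infinity>)"
proof -
  obtain hx hy where "\<forall>z\<in>M. (h has_derivative (\<lambda>v. Re v * hx z + Im v * hy z)) (at z)"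
    using assms(7) unfolding harmonic_on_def by blast
  then have "isCont h z0" using assms(8) has_derivative_continuous by blast
  then obtain \<delta> c where "\<delta> > 0" "c > 0" and pole: "ennsqrt (lam \<omega> h z0) = \<infinity>"
    and near_pole: "\<And>z. z \<noteq> z0 \<Longrightarrow> dist z z0 < \<delta> \<Longrightarrow> ennreal (c / dist z z0) \<le> ennsqrt (lam \<omega> h z)"
    using sqrt_lam_ge_inverse_dist_near_atom[OF assms(4,5,6,9)] by blast
  have s_tilde_top: "s_tilde (lam \<omega> h) g = \<infinity>"
    if g: "broken_line g" "arclength_param g" and e: "e \<in> {0, 1}" "g e = z0" for g e
  proof -
    obtain s t C where "s < t" "e \<in> {s..t}" "{s..t} \<subseteq> {0..1}" "C \<ge> 0"
      and "\<And>x. x \<in> {s..t} \<Longrightarrow> dist (g x) z0 \<le> C * \<bar>x - e\<bar>"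
      using broken_line_dist_endpoint_le[OF g(1) e(1)] unfolding e(2) by blast
    then have "(\<integral>\<^sup>+ x \<in> {0..1}. ennsqrt (lam \<omega> h (g x)) \<partial>lborel) = \<infinity>"
      by (intro nn_integral_comp_eq_top_near_pole[OF \<open>\<delta> > 0\<close> \<open>c > 0\<close> pole near_pole])
    moreover obtain t' where "t' \<in> {0..1}" "g t' \<noteq> g 0"
      using g(1) unfolding broken_line_def by blast
    ultimately show ?thesis
      using path_length_neq_0_if_arclength_param[OF g(2)]
      by (simp add: s_tilde_def ennreal_mult_top)
  qed
  show ?thesis
  proof (intro conjI allI impI ballI)
    fix g assume "broken_line g \<and> arclength_param g \<and> g ` {0..1} \<subseteq> M \<and> (g 0 = z0 \<or> g 1 = z0)"
    then show "s_tilde (lam \<omega> h) g = \<infinity>" using s_tilde_top[of g 0] s_tilde_top[of g 1] by auto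
  next
    fix z
    show "rho (lam \<omega> h) M z0 z = \<infinity>"
      unfolding rho_def using s_tilde_top[of _ 0] by (auto intro!: order.antisym INF_greatest)
  qed
qed

end
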